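(* Let $a^*(\lambda)$ be the density on $[0,9]$ of the push-forward of the normalized Haar measure on $\{|x_1|=|x_2|=1\}$ under $P_2=(1+x_1+x_2)(1+x_1^{-1}+x_2^{-1})$, and let $c(t)=\int_0^1\frac{a^*(\lambda)}{1-t\lambda}d\lambda=\sum_{m\ge0}c_mt^m$. Let $\widetilde{\mathcal L}_2(\lambda,\theta)=9\theta^2-\lambda(10\theta^2+10\theta+3)+\lambda^2(\theta+1)^2$. Then $c_0=\frac14$ and \[ \Bigl[\widetilde{\mathcal L}_2\Bigl(\frac1t,-\theta_t-1\Bigr)c(t)\Bigr]_-=-\frac{6}{\pi^2\,t}. \]
   Context: $\theta_t=t\frac{d}{dt}$. For an operator $\mathcal M(\lambda,\theta)=\sum d_{ij}\lambda^i\theta^j$, $\mathcal M(\frac1t,-\theta_t-1)$ denotes $\sum d_{ij}t^{-i}(-\theta_t-1)^j$. For a Laurent series $\sum_na_nt^n$, $[\sum_na_nt^n]_-=\sum_{n<0}a_nt^n$. *)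

theory Defs
  imports "HOL-Analysis.Analysis" "HOL-Computational_Algebra.Computational_Algebra"
begin

definition theta_t :: "real fls \<Rightarrow> real fls" where
  "theta_t f = fls_X * fls_deriv f"

text \<open>An operator M(lambda,theta) = sum d_ij lambda^i theta^j is encoded as a bivariate
  polynomial: outer variable theta, inner variable lambda, so d_ij = coeff (coeff M j) i.\<close>
definition op_subst :: "real poly poly \<Rightarrow> real fls \<Rightarrow> real fls" where
  "op_subst M f =
     (\<Sum>j\<le>degree M. \<Sum>i\<le>degree (coeff M j).
        fls_const (coeff (coeff M j) i) * fls_X_intpow (- int i)
          * (((\<lambda>g. - theta_t g - g) ^^ j) f))"

definition neg_part :: "real fls \<Rightarrow> real fls" where
  "neg_part f = f - fps_to_fls (fls_regpart f)"

text \<open>L~_2(lambda,theta) = 9 theta^2 - lambda(10 theta^2 + 10 theta + 3) + lambda^2 (theta+1)^2,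
  written as a polynomial in theta with coefficients polynomials in lambda.\<close>
definition Ltilde2 :: "real poly poly" where
  "Ltilde2 = [: [:0, -3, 1:], [:0, -10, 2:], [:9, -10, 1:] :]"

definition P2 :: "complex \<Rightarrow> complex \<Rightarrow> complex" where
  "P2 x1 x2 = (1 + x1 + x2) * (1 + inverse x1 + inverse x2)"

definition haar_T2 :: "(complex \<times> complex) measure" where
  "haar_T2 = distr (uniform_measure lborel ({0..2*pi} \<times> {0..2*pi})) borel
               (\<lambda>(s, u). (cis s, cis u))"

end

theory Submission
  imports Defs
begin

text \<open>On the torus, \<open>P2(e^is, e^iu) = |1 + e^is + e^iu|^2 = 3 + 2 cos s + 2 cos u + 2 cos (s - u)\<close>
  and \<open>P2 - 1 = 8 cos (s/2) cos (u/2) cos ((s - u)/2)\<close>, so the part of the torus where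
  \<open>P2 \<le> 1\<close> consists of two explicit triangles in angle coordinates. The moments
  \<open>c_m = \<integral>\<^sub>0\<^sup>1 \<lambda>^m a(\<lambda>) d\<lambda>\<close> are therefore elementary double integrals, giving \<open>c_0 = 1/4\<close>
  and \<open>c_1 = 3/4 - 6/pi^2\<close>. On the formal side, \<open>\<theta>\<^sub>t\<close> acts diagonally on \<open>t^n\<close>, and since
  \<open>\<lambda>\<close> occurs with degree at most 2, the negative part of the operator applied to \<open>c(t)\<close>
  involves only \<open>c_0, c_1\<close>: it is \<open>(c_1 - 3 c_0) / t\<close>.\<close>

unbundle fps_syntax

lemma fls_nth_euler_shift: "(- theta_t f - f) $$ n = - (of_int n + 1) * f $$ n"
  by (simp add: theta_t_def fls_X_times_conv_shift algebra_simps)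

lemma fls_nth_funpow_euler_shift:
  "(((\<lambda>g. - theta_t g - g) ^^ j) f) $$ n = (- (of_int n + 1)) ^ j * f $$ n"
  by (induction j) (simp_all only: funpow.simps comp_def fls_nth_euler_shift, simp_all)

lemma op_subst_nth:
  "op_subst M f $$ n = (\<Sum>j\<le>degree M. \<Sum>i\<le>degree (coeff M j).
     coeff (coeff M j) i * (- (of_int (n + int i) + 1)) ^ j * f $$ (n + int i))"
proof -
  have shift: "(fls_const d * fls_X_intpow k * g) $$ n = d * g $$ (n - k)" for d k and g :: "real fls"
    by (subst mult.assoc, subst fls_X_intpow_times_conv_shift(1)) simp
  show ?thesis
    unfolding op_subst_def fls_nth_sum shift by (simp add: fls_nth_funpow_euler_shift mult.assoc)
qed

lemma neg_part_nth: "neg_part f $$ n = (if n < 0 then f $$ n else 0)"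
  by (simp add: neg_part_def)

lemma neg_part_op_subst_Ltilde2:
  fixes c :: "real fps"
  shows "neg_part (op_subst Ltilde2 (fps_to_fls c)) = fls_const (c $ 1 - 3 * c $ 0) * fls_X_inv"
    (is "?L = ?R")
  unfolding fls_eq_iff
proof
  fix n :: int
  show "?L $$ n = ?R $$ n"
    by (cases "n = -1 \<or> n = -2")
      (auto simp: neg_part_nth op_subst_nth Ltilde2_def numeral_2_eq_2 power2_eq_square)
qed

definition P2_angle :: "real \<Rightarrow> real \<Rightarrow> real" where
  "P2_angle s u = 3 + 2 * cos s + 2 * cos u + 2 * cos (s - u)"

lemma Re_P2_cis: "Re (P2 (cis s) (cis u)) = P2_angle s u"
  using cos_diff[of s u]
  by (simp add: P2_def P2_angle_def inverse_complex_def power2_eq_square algebra_simps)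

lemma P2_angle_nonneg: "P2_angle s u \<ge> 0"
proof -
  have "P2_angle s u = (1 + cos s + cos u)\<^sup>2 + (sin s + sin u)\<^sup>2"
    by (simp add: P2_angle_def cos_diff power2_eq_square algebra_simps)
      (use sin_cos_squared_add3[of s] sin_cos_squared_add3[of u] in linarith)
  then show ?thesis by simp
qed

lemma P2_angle_minus_one: "P2_angle s u - 1 = 8 * cos (s/2) * (cos (u/2) * cos ((s - u)/2))"
proof -
  define a b where "a = s/2" and "b = u/2"
  have "s = 2*a" "u = 2*b" "s - u = 2*(a - b)" "(s - u)/2 = a - b"
    by (simp_all add: a_def b_def field_simps)
  moreover have "sin a ^ 2 = 1 - cos a ^ 2" "sin b ^ 2 = 1 - cos b ^ 2"
    by (simp_all add: sin_squared_eq)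
  ultimately show ?thesis
    unfolding P2_angle_def a_def[symmetric] b_def[symmetric]
    by (simp only: cos_double_cos cos_diff) algebra
qed

lemma P2_angle_le_one_iff:
  "P2_angle s u \<le> 1 \<longleftrightarrow> cos (s/2) * (cos (u/2) * cos ((s - u)/2)) \<le> 0"
  using P2_angle_minus_one[of s u] by linarith

lemma cos_neg_if_gt_pi_half: "pi/2 < x \<Longrightarrow> x \<le> pi \<Longrightarrow> cos x < 0"
  using cos_gt_zero_pi[of "x - pi"] by (simp add: cos_diff)

lemma P2_angle_le_one_iff_lower:
  assumes s: "0 < s" "s < pi" and u: "0 \<le> u" "u \<le> 2*pi"
  shows "P2_angle s u \<le> 1 \<longleftrightarrow> pi \<le> u \<and> u \<le> pi + s"
proof -
  have "cos (s/2) > 0" using s by (intro cos_gt_zero_pi) auto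
  moreover have "cos (u/2) * cos ((s - u)/2) \<le> 0 \<longleftrightarrow> pi \<le> u \<and> u \<le> pi + s"
  proof -
    consider "u < pi" | "u = pi" | "pi < u" "u \<le> pi + s" | "pi + s < u" by linarith
    then show ?thesis
    proof cases
      case 1
      then have "cos (u/2) > 0" "cos ((s - u)/2) > 0"
        using u s by (auto intro!: cos_gt_zero_pi)
      then show ?thesis using 1 by (simp add: not_le)
    next
      case 3
      then have "cos (u/2) < 0" "cos ((s - u)/2) \<ge> 0"
        using u s by (auto intro!: cos_neg_if_gt_pi_half cos_ge_zero)
      then show ?thesis using 3 by (simp add: mult_nonpos_nonneg)
    next
      case 4
      have "cos ((s - u)/2) = cos ((u - s)/2)"
        by (metis cos_minus minus_diff_eq minus_divide_left)
      moreover have "cos (u/2) < 0" "cos ((u - s)/2) < 0"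
        using 4 u s by (auto intro!: cos_neg_if_gt_pi_half)
      ultimately show ?thesis using 4 by (simp add: mult_neg_neg not_le)
    qed (use s in simp)
  qed
  ultimately show ?thesis
    by (auto simp: P2_angle_le_one_iff mult_le_0_iff)
qed

lemma P2_angle_le_one_iff_upper:
  assumes s: "pi < s" "s < 2*pi" and u: "0 \<le> u" "u \<le> 2*pi"
  shows "P2_angle s u \<le> 1 \<longleftrightarrow> s - pi \<le> u \<and> u \<le> pi"
proof -
  have "cos (s/2) < 0" using s by (intro cos_neg_if_gt_pi_half) auto
  moreover have "cos (u/2) * cos ((s - u)/2) \<ge> 0 \<longleftrightarrow> s - pi \<le> u \<and> u \<le> pi"
  proof -
    consider "u < s - pi" | "s - pi \<le> u" "u < pi" | "u = pi" | "pi < u" by linarith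
    then show ?thesis
    proof cases
      case 1
      then have "cos (u/2) > 0" "cos ((s - u)/2) < 0"
        using u s by (auto intro!: cos_gt_zero_pi cos_neg_if_gt_pi_half)
      then show ?thesis using 1 by (simp add: mult_pos_neg not_le)
    next
      case 2
      then have "cos (u/2) > 0" "cos ((s - u)/2) \<ge> 0"
        using u s by (auto intro!: cos_gt_zero_pi cos_ge_zero)
      then show ?thesis using 2 by simp
    next
      case 4
      then have "cos (u/2) < 0" "cos ((s - u)/2) > 0"
        using u s by (auto intro!: cos_neg_if_gt_pi_half cos_gt_zero_pi)
      then show ?thesis using 4 by (simp add: mult_neg_pos not_le)
    qed (use s in simp)
  qed
  ultimately show ?thesis
    by (auto simp: P2_angle_le_one_iff mult_le_0_iff)
qed

definition torus_average :: "(real \<Rightarrow> real \<Rightarrow> real) \<Rightarrow> real" where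
  "torus_average g =
     (\<integral>s. indicator {0..2*pi} s * (\<integral>u. indicator {0..2*pi} u * g s u \<partial>lborel) \<partial>lborel) / (4*pi^2)"

lemma cis_borel_measurable [measurable]: "cis \<in> borel_measurable borel"
  by (intro borel_measurable_continuous_onI continuous_intros)

lemma Re_P2_borel_measurable [measurable]:
  "(\<lambda>(x1, x2). Re (P2 x1 x2)) \<in> borel_measurable (borel :: (complex \<times> complex) measure)"
  unfolding P2_def borel_prod[symmetric] by measurable

lemma emeasure_angle_square: "emeasure lborel ({0..2*pi} \<times> {0..2*pi::real}) = ennreal (4*pi^2)"
proof -
  have "emeasure (lborel \<Otimes>\<^sub>M lborel) ({0..2*pi} \<times> {0..2*pi::real}) = ennreal (2*pi) * ennreal (2*pi)"
    by (subst lborel.emeasure_pair_measure_Times) auto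
  also have "\<dots> = ennreal (4*pi^2)"
    by (simp add: ennreal_mult'[symmetric] power2_eq_square)
  finally show ?thesis by (simp add: lborel_prod)
qed

lemma integral_haar_T2:
  fixes g :: "complex \<times> complex \<Rightarrow> real"
  assumes [measurable]: "g \<in> borel_measurable borel" and bound: "\<And>z. \<bar>g z\<bar> \<le> B"
  shows "(\<integral>z. g z \<partial>haar_T2) = torus_average (\<lambda>s u. g (cis s, cis u))"
proof -
  let ?R = "{0..2*pi} \<times> {0..2*pi::real}"
  let ?G = "\<lambda>y. g (cis (fst y), cis (snd y))"
  have [measurable]: "?R \<in> sets (borel :: (real \<times> real) measure)"
    by (intro borel_closed closed_Times closed_atLeastAtMost)
  have [measurable]: "(\<lambda>y. (cis (fst y), cis (snd y))) \<in> borel_measurable (borel :: (real \<times> real) measure)"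
    unfolding borel_prod[symmetric] by measurable
  have uniform: "uniform_measure lborel ?R = density lborel (\<lambda>y. ennreal (indicator ?R y / (4*pi^2)))"
  proof -
    have "1 / ennreal (4*pi^2) = ennreal (1 / (4*pi^2))"
      using divide_ennreal[of 1 "4*pi^2"] by simp
    then have "(\<lambda>y. indicator ?R y / emeasure lborel ?R) = (\<lambda>y. ennreal (indicator ?R y / (4*pi^2)))"
      unfolding emeasure_angle_square by (auto simp: indicator_def)
    then show ?thesis
      unfolding uniform_measure_def by simp
  qed
  have "(\<integral>z. g z \<partial>haar_T2) = (\<integral>y. ?G y \<partial>uniform_measure lborel ?R)"
    unfolding haar_T2_def case_prod_beta
    by (rule integral_distr)
      (simp_all add: borel_prod measurable_cong_sets[OF sets_uniform_measure refl])
  also have "\<dots> = (\<integral>y. indicator ?R y / (4*pi^2) * ?G y \<partial>lborel)"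
    unfolding uniform by (subst integral_density) auto
  also have "\<dots> = (\<integral>y. indicator ?R y / (4*pi^2) * ?G y \<partial>(lborel \<Otimes>\<^sub>M lborel))"
    by (simp add: lborel_prod)
  also have "\<dots> = (\<integral>s. (\<integral>u. indicator ?R (s, u) / (4*pi^2) * g (cis s, cis u) \<partial>lborel) \<partial>lborel)"
  proof -
    have "integrable (lborel \<Otimes>\<^sub>M lborel) (\<lambda>y. indicator ?R y / (4*pi^2) * ?G y)"
    proof (rule Bochner_Integration.integrable_bound)
      show "integrable (lborel \<Otimes>\<^sub>M lborel) (\<lambda>y. B * indicator ?R y :: real)"
        using emeasure_angle_square by (simp add: lborel_prod integrable_indicator_iff)
      have "\<bar>?G y\<bar> / (4*pi^2) \<le> \<bar>B\<bar>" for y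
      proof -
        have "(1::real) \<le> 4*pi^2"
          using pi_ge_two power_mono[of 2 pi 2] by simp
        then have "\<bar>?G y\<bar> / (4*pi^2) \<le> \<bar>?G y\<bar> / 1"
          by (intro frac_le) auto
        then show ?thesis using bound[of "(cis (fst y), cis (snd y))"] by linarith
      qed
      then show "AE y in lborel \<Otimes>\<^sub>M lborel.
          norm (indicator ?R y / (4*pi^2) * ?G y) \<le> norm (B * indicator ?R y :: real)"
        by (intro AE_I2) (auto simp: indicator_def abs_mult)
    qed (unfold lborel_prod measurable_lborel1, measurable)
    from lborel_pair.integral_fst'[OF this] show ?thesis by simp
  qed
  also have "\<dots> = torus_average (\<lambda>s u. g (cis s, cis u))"
    unfolding torus_average_def
    by (simp add: indicator_times mult_ac flip: integral_mult_right_zero)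
  finally show ?thesis .
qed

lemma integral_distr_Re_P2:
  fixes h :: "real \<Rightarrow> real"
  assumes [measurable]: "h \<in> borel_measurable borel" and bound: "\<And>x. \<bar>h x\<bar> \<le> B"
  shows "(\<integral>x. h x \<partial>distr haar_T2 borel (\<lambda>(x1, x2). Re (P2 x1 x2)))
    = torus_average (\<lambda>s u. h (P2_angle s u))"
proof -
  have sets_haar_T2: "sets haar_T2 = sets borel"
    by (simp add: haar_T2_def)
  have "(\<integral>x. h x \<partial>distr haar_T2 borel (\<lambda>(x1, x2). Re (P2 x1 x2)))
      = (\<integral>z. h ((\<lambda>(x1, x2). Re (P2 x1 x2)) z) \<partial>haar_T2)"
    by (rule integral_distr) (simp_all add: measurable_cong_sets[OF sets_haar_T2 refl])
  also have "\<dots> = torus_average (\<lambda>s u. h (P2_angle s u))"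
    by (subst integral_haar_T2[where B = B]) (simp_all add: bound Re_P2_cis)
  finally show ?thesis .
qed

lemma torus_average_split:
  fixes g :: "real \<Rightarrow> real \<Rightarrow> real" and A B :: "real \<Rightarrow> real"
  assumes g_meas: "(\<lambda>(s, u). g s u) \<in> borel_measurable (lborel \<Otimes>\<^sub>M lborel)"
    and A: "continuous_on {0..pi} A" and B: "continuous_on {pi..2*pi} B"
    and inner_A: "\<And>s. 0 < s \<Longrightarrow> s < pi \<Longrightarrow> (\<integral>u. indicator {0..2*pi} u * g s u \<partial>lborel) = A s"
    and inner_B: "\<And>s. pi < s \<Longrightarrow> s < 2*pi \<Longrightarrow> (\<integral>u. indicator {0..2*pi} u * g s u \<partial>lborel) = B s"
  shows "torus_average g
    = ((\<integral>s. indicator {0..pi} s *\<^sub>R A s \<partial>lborel) + (\<integral>s. indicator {pi..2*pi} s *\<^sub>R B s \<partial>lborel)) / (4*pi^2)"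
proof -
  have int_A: "integrable lborel (\<lambda>s. indicator {0..pi} s *\<^sub>R A s)"
    using borel_integrable_atLeastAtMost'[OF A] by (simp add: set_integrable_def)
  have int_B: "integrable lborel (\<lambda>s. indicator {pi..2*pi} s *\<^sub>R B s)"
    using borel_integrable_atLeastAtMost'[OF B] by (simp add: set_integrable_def)
  have [measurable]: "(\<lambda>(s, u). indicator {0..2*pi} u * g s u) \<in> borel_measurable (lborel \<Otimes>\<^sub>M lborel)"
    using g_meas by measurable
  have "AE s in lborel. s \<noteq> 0" "AE s in lborel. s \<noteq> pi" "AE s in lborel. s \<noteq> 2*pi"
    by (rule AE_lborel_singleton)+
  then have "AE s in lborel. indicator {0..2*pi} s * (\<integral>u. indicator {0..2*pi} u * g s u \<partial>lborel)
      = indicator {0..pi} s *\<^sub>R A s + indicator {pi..2*pi} s *\<^sub>R B s"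
  proof eventually_elim
    case (elim s)
    consider "0 < s \<and> s < pi" | "pi < s \<and> s < 2*pi" | "s \<notin> {0..2*pi}"
      using elim by force
    then show ?case
      by cases (auto simp: inner_A inner_B)
  qed
  then have "(\<integral>s. indicator {0..2*pi} s * (\<integral>u. indicator {0..2*pi} u * g s u \<partial>lborel) \<partial>lborel)
      = (\<integral>s. indicator {0..pi} s *\<^sub>R A s + indicator {pi..2*pi} s *\<^sub>R B s \<partial>lborel)"
    using int_A int_B
    by (intro integral_cong_AE) (auto intro: lborel.borel_measurable_lebesgue_integral)
  also have "\<dots> = (\<integral>s. indicator {0..pi} s *\<^sub>R A s \<partial>lborel) + (\<integral>s. indicator {pi..2*pi} s *\<^sub>R B s \<partial>lborel)"
    by (rule Bochner_Integration.integral_add[OF int_A int_B])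
  finally show ?thesis
    unfolding torus_average_def by simp
qed

definition unit_moment :: "nat \<Rightarrow> real \<Rightarrow> real" where
  "unit_moment m x = indicator {0..1} x * x ^ m"

lemma unit_moment_borel_measurable [measurable]: "unit_moment m \<in> borel_measurable borel"
  unfolding unit_moment_def by measurable

lemma abs_unit_moment_le_1: "\<bar>unit_moment m x\<bar> \<le> 1"
  by (auto simp: unit_moment_def indicator_def abs_mult power_le_one power_abs)

lemma P2_angle_measurable [measurable]:
  "(\<lambda>(s, u). P2_angle s u) \<in> borel_measurable (lborel \<Otimes>\<^sub>M lborel)"
  unfolding lborel_prod measurable_lborel2 case_prod_beta P2_angle_def borel_prod[symmetric]
  by measurable

lemma integral_unit_moment_P2_angle_lower:
  assumes "0 < s" "s < pi"
  shows "(\<integral>u. indicator {0..2*pi} u * unit_moment m (P2_angle s u) \<partial>lborel)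
    = (\<integral>u. indicator {pi..pi+s} u *\<^sub>R P2_angle s u ^ m \<partial>lborel)"
  using P2_angle_le_one_iff_lower[OF assms] P2_angle_nonneg assms
  by (intro Bochner_Integration.integral_cong) (auto simp: unit_moment_def indicator_def)

lemma integral_unit_moment_P2_angle_upper:
  assumes "pi < s" "s < 2*pi"
  shows "(\<integral>u. indicator {0..2*pi} u * unit_moment m (P2_angle s u) \<partial>lborel)
    = (\<integral>u. indicator {s-pi..pi} u *\<^sub>R P2_angle s u ^ m \<partial>lborel)"
  using P2_angle_le_one_iff_upper[OF assms] P2_angle_nonneg assms
  by (intro Bochner_Integration.integral_cong) (auto simp: unit_moment_def indicator_def)

lemma integral_indicator_FTC:
  fixes F f :: "real \<Rightarrow> real"
  assumes "a \<le> b" and "\<And>x. (F has_real_derivative f x) (at x)" and "continuous_on {a..b} f"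
  shows "(\<integral>x. indicator {a..b} x *\<^sub>R f x \<partial>lborel) = F b - F a"
  by (rule integral_FTC_atLeastAtMost[OF assms(1) _ assms(3)])
    (simp add: has_real_derivative_iff_has_vector_derivative[symmetric] has_field_derivative_at_within assms(2))

lemma torus_average_unit_moment_0: "torus_average (\<lambda>s u. unit_moment 0 (P2_angle s u)) = 1/4"
proof -
  have "torus_average (\<lambda>s u. unit_moment 0 (P2_angle s u))
      = ((\<integral>s. indicator {0..pi} s *\<^sub>R s \<partial>lborel) + (\<integral>s. indicator {pi..2*pi} s *\<^sub>R (2*pi - s) \<partial>lborel)) / (4*pi^2)"
  proof (rule torus_average_split)
    fix s :: real
    assume "0 < s" "s < pi"
    then show "(\<integral>u. indicator {0..2*pi} u * unit_moment 0 (P2_angle s u) \<partial>lborel) = s"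
      using integral_indicator_FTC[of pi "pi + s" "\<lambda>u. u" "\<lambda>_. 1"]
      by (simp add: integral_unit_moment_P2_angle_lower)
  next
    fix s :: real
    assume "pi < s" "s < 2*pi"
    then show "(\<integral>u. indicator {0..2*pi} u * unit_moment 0 (P2_angle s u) \<partial>lborel) = 2*pi - s"
      using integral_indicator_FTC[of "s - pi" pi "\<lambda>u. u" "\<lambda>_. 1"]
      by (simp add: integral_unit_moment_P2_angle_upper)
  qed (auto intro!: continuous_intros)
  also have "(\<integral>s. indicator {0..pi} s *\<^sub>R s \<partial>lborel) = pi^2/2 - 0^2/2"
    by (rule integral_indicator_FTC) (auto intro!: derivative_eq_intros continuous_intros)
  also have "(\<integral>s. indicator {pi..2*pi} s *\<^sub>R (2*pi - s) \<partial>lborel)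
      = (2*pi*(2*pi) - (2*pi)^2/2) - (2*pi*pi - pi^2/2)"
    by (rule integral_indicator_FTC[where F = "\<lambda>x. 2*pi*x - x^2/2"])
      (auto intro!: derivative_eq_intros continuous_intros)
  finally show ?thesis
    by (simp add: power2_eq_square field_simps)
qed

lemma torus_average_unit_moment_1:
  "torus_average (\<lambda>s u. unit_moment 1 (P2_angle s u)) = (3*pi^2 - 24) / (4*pi^2)"
proof -
  define G :: "real \<Rightarrow> real \<Rightarrow> real" where "G s u = (3 + 2*cos s)*u + 2 * sin u - 2 * sin (s - u)" for s u
  define A :: "real \<Rightarrow> real" where "A s = (3 + 2*cos s) * s - 4 * sin s" for s
  define B :: "real \<Rightarrow> real" where "B s = (3 + 2*cos s)*(2*pi - s) + 4 * sin s" for s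
  have G_deriv: "(G s has_real_derivative P2_angle s u) (at u)" for s u
    unfolding G_def P2_angle_def by (auto intro!: derivative_eq_intros)
  have P2_angle_cont: "continuous_on S (P2_angle s)" for S s
    unfolding P2_angle_def by (intro continuous_intros)
  have "torus_average (\<lambda>s u. unit_moment 1 (P2_angle s u))
      = ((\<integral>s. indicator {0..pi} s *\<^sub>R A s \<partial>lborel) + (\<integral>s. indicator {pi..2*pi} s *\<^sub>R B s \<partial>lborel)) / (4*pi^2)"
  proof (rule torus_average_split)
    fix s :: real
    assume s: "0 < s" "s < pi"
    have "(\<integral>u. indicator {pi..pi+s} u *\<^sub>R P2_angle s u \<partial>lborel) = G s (pi + s) - G s pi"
      using s by (intro integral_indicator_FTC G_deriv P2_angle_cont) auto
    also have "\<dots> = A s"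
      by (simp add: G_def A_def sin_add sin_diff algebra_simps)
    finally show "(\<integral>u. indicator {0..2*pi} u * unit_moment 1 (P2_angle s u) \<partial>lborel) = A s"
      using s by (simp add: integral_unit_moment_P2_angle_lower)
  next
    fix s :: real
    assume s: "pi < s" "s < 2*pi"
    have "(\<integral>u. indicator {s-pi..pi} u *\<^sub>R P2_angle s u \<partial>lborel) = G s pi - G s (s - pi)"
      using s by (intro integral_indicator_FTC G_deriv P2_angle_cont) auto
    also have "\<dots> = B s"
      by (simp add: G_def B_def sin_add sin_diff algebra_simps)
    finally show "(\<integral>u. indicator {0..2*pi} u * unit_moment 1 (P2_angle s u) \<partial>lborel) = B s"
      using s by (simp add: integral_unit_moment_P2_angle_upper)
  qed (auto simp: A_def B_def intro!: continuous_intros)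
  also have "(\<integral>s. indicator {0..pi} s *\<^sub>R A s \<partial>lborel) = 3*pi^2/2 - 12"
  proof -
    let ?F = "\<lambda>x. 3*x^2/2 + 2*(x * sin x + cos x) + 4*cos x"
    have "(\<integral>s. indicator {0..pi} s *\<^sub>R A s \<partial>lborel) = ?F pi - ?F 0"
      unfolding A_def
      by (rule integral_indicator_FTC) (auto intro!: derivative_eq_intros continuous_intros simp: algebra_simps)
    then show ?thesis by simp
  qed
  also have "(\<integral>s. indicator {pi..2*pi} s *\<^sub>R B s \<partial>lborel) = 3*pi^2/2 - 12"
  proof -
    let ?F = "\<lambda>x. 6*pi*x - 3*x^2/2 + 2*(2*pi - x) * sin x - 6*cos x"
    have "(\<integral>s. indicator {pi..2*pi} s *\<^sub>R B s \<partial>lborel) = ?F (2*pi) - ?F pi"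
      unfolding B_def
      by (rule integral_indicator_FTC) (auto intro!: derivative_eq_intros continuous_intros simp: algebra_simps)
    then show ?thesis by (simp add: power2_eq_square algebra_simps)
  qed
  finally show ?thesis
    by (simp add: power2_eq_square field_simps)
qed

lemma moment_eq_torus_average:
  fixes a :: "real \<Rightarrow> real"
  assumes [measurable]: "a \<in> borel_measurable borel" and a_nonneg: "\<And>x. a x \<ge> 0"
    and a_density: "distr haar_T2 borel (\<lambda>(x1, x2). Re (P2 x1 x2))
                      = density lborel (\<lambda>x. ennreal (a x))"
  shows "(LBINT l:{0..1}. l ^ m * a l) = torus_average (\<lambda>s u. unit_moment m (P2_angle s u))"
proof -
  have "(LBINT l:{0..1}. l ^ m * a l) = (\<integral>x. a x * unit_moment m x \<partial>lborel)"
    unfolding set_lebesgue_integral_def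
    by (rule Bochner_Integration.integral_cong) (auto simp: unit_moment_def)
  also have "\<dots> = (\<integral>x. unit_moment m x \<partial>density lborel (\<lambda>x. ennreal (a x)))"
    by (subst integral_density) (auto simp: a_nonneg)
  also have "\<dots> = torus_average (\<lambda>s u. unit_moment m (P2_angle s u))"
    unfolding a_density[symmetric] by (rule integral_distr_Re_P2[OF _ abs_unit_moment_le_1]) simp
  finally show ?thesis .
qed

theorem lemma5p3:
  fixes a :: "real \<Rightarrow> real" and c :: "real fps"
  assumes a_meas: "a \<in> borel_measurable borel"
    and a_nonneg: "\<And>x. a x \<ge> 0"
    and a_supp: "\<And>x. x \<notin> {0..9} \<Longrightarrow> a x = 0"
    and a_density: "distr haar_T2 borel (\<lambda>(x1, x2). Re (P2 x1 x2))
                      = density lborel (\<lambda>x. ennreal (a x))"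
    and c_def: "\<And>m. c $ m = (LBINT l:{0..1}. l ^ m * a l)"
  shows "c $ 0 = 1/4
     \<and> neg_part (op_subst Ltilde2 (fps_to_fls c)) = fls_const (- 6 / pi\<^sup>2) * fls_X_inv"
proof -
  have c_moment: "c $ m = torus_average (\<lambda>s u. unit_moment m (P2_angle s u))" for m
    unfolding c_def by (rule moment_eq_torus_average[OF a_meas a_nonneg a_density])
  have c0: "c $ 0 = 1/4"
    by (simp add: c_moment torus_average_unit_moment_0)
  have "c $ 1 - 3 * c $ 0 = (3*pi^2 - 24) / (4*pi^2) - 3/4"
    unfolding c_moment torus_average_unit_moment_0 torus_average_unit_moment_1 by simp
  also have "\<dots> = - 6 / pi^2"
    by (simp add: field_simps)
  finally have residue: "c $ 1 - 3 * c $ 0 = - 6 / pi^2" .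
  show ?thesis
    using c0 unfolding neg_part_op_subst_Ltilde2 residue by simp
qed

end
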